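(* Let $\mathbf{r}\in\mathbb{Q}^n$, let $\le_m$ be a monomial order and let $<_{\mathbf{r},m}$ be the associated term order. Let $T$ be a finite set of terms of $K[\mathbf{X}]$. Then there exists $\mathbf{s}\in\mathbb{Q}^n$ such that for all $t_1,t_2\in T$, $$t_1>_{\mathbf{r},m}t_2 \iff \mathrm{val}_{\mathbf{s}}(t_1)<\mathrm{val}_{\mathbf{s}}(t_2).$$ In particular, if $F$ is a finite set of polynomials in $K[\mathbf{X}]$, every equivalence class of term orders (of the form $<_{\mathbf{r},m}$) with respect to $F$ contains a term order $<_{\mathbf{s},m}$ such that $\mathrm{LT}_{\mathbf{s},m}(f)=\mathrm{init}_{\mathbf{s}}(f)$ for all $f\in F$.
   Context: $K$ is a field complete for a discrete valuation $\mathrm{val}$. A term is $c\mathbf{X}^\alpha$ with $c\in K^\times$, $\alpha\in\mathbb{N}^n$. For $\mathbf{s}\in\mathbb{Q}^n$, the Gauss valuation of a term is $\mathrm{val}_{\mathbf{s}}(c\mathbf{X}^\alpha)=\mathrm{val}(c)-\mathbf{s}\cdot\alpha$, and of a polynomial $f$ it is the minimum over its terms. Given a monomial order $\le_m$, $a\mathbf{X}^\alpha<_{\mathbf{r},m}b\mathbf{X}^\beta$ iff $\mathrm{val}_{\mathbf{r}}(a\mathbf{X}^\alpha)>\mathrm{val}_{\mathbf{r}}(b\mathbf{X}^\beta)$, or they are equal and $\mathbf{X}^\alpha<_m\mathbf{X}^\beta$; $\mathrm{LT}_{\mathbf{r},m}(f)$ is the maximal term of $f$. The initial part $\mathrm{init}_{\mathbf{s}}(f)$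 is the sum of the terms of $f$ whose Gauss valuation $\mathrm{val}_{\mathbf{s}}$ equals $\mathrm{val}_{\mathbf{s}}(f)$. Two term orders $<_1,<_2$ are equivalent with respect to a finite set $F$ if $\{\mathrm{LT}_{<_1}(f):f\in F\}=\{\mathrm{LT}_{<_2}(f):f\in F\}$. *)

theory Defs
  imports Complex_Main "HOL-Library.Poly_Mapping"
begin

text \<open>Discrete (normalised) valuation on a field: val is defined on nonzero
elements (val 0 = infinity is never used), multiplicative, ultrametric and
surjective onto the integers.\<close>
definition discrete_valuation :: "('k::field \<Rightarrow> int) \<Rightarrow> bool" where
  "discrete_valuation val \<longleftrightarrow>
     (\<forall>x y. x \<noteq> 0 \<and> y \<noteq> 0 \<longrightarrow> val (x * y) = val x + val y) \<and>
     (\<forall>x y. x \<noteq> 0 \<and> y \<noteq> 0 \<and> x + y \<noteq> 0 \<longrightarrow> min (val x) (val y) \<le> val (x + y)) \<and>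
     val ` (UNIV - {0}) = UNIV"

text \<open>Completeness for the valuation: valuation-Cauchy sequences converge.
(val (x - y) \<ge> N is read as true when x = y, i.e. val 0 = infinity.)\<close>
definition val_complete :: "('k::field \<Rightarrow> int) \<Rightarrow> bool" where
  "val_complete val \<longleftrightarrow>
     (\<forall>x :: nat \<Rightarrow> 'k.
        (\<forall>N::int. \<exists>M. \<forall>i\<ge>M. \<forall>j\<ge>M. x i = x j \<or> N \<le> val (x i - x j)) \<longrightarrow>
        (\<exists>L. \<forall>N::int. \<exists>M. \<forall>i\<ge>M. x i = L \<or> N \<le> val (x i - L)))"

definition monomials :: "nat \<Rightarrow> (nat \<Rightarrow>\<^sub>0 nat) set" where
  "monomials n = {\<alpha>. Poly_Mapping.keys \<alpha> \<subseteq> {..<n}}"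

definition polys :: "nat \<Rightarrow> ((nat \<Rightarrow>\<^sub>0 nat) \<Rightarrow>\<^sub>0 'k::field) set" where
  "polys n = {f. Poly_Mapping.keys f \<subseteq> monomials n}"

text \<open>Terms c X^alpha with c nonzero, represented as pairs (c, alpha).\<close>
definition terms :: "nat \<Rightarrow> ('k::field \<times> (nat \<Rightarrow>\<^sub>0 nat)) set" where
  "terms n = {(c, \<alpha>). c \<noteq> 0 \<and> \<alpha> \<in> monomials n}"

definition monomial_order :: "nat \<Rightarrow> ((nat \<Rightarrow>\<^sub>0 nat) \<Rightarrow> (nat \<Rightarrow>\<^sub>0 nat) \<Rightarrow> bool) \<Rightarrow> bool" where
  "monomial_order n le \<longleftrightarrow>
     (\<forall>\<alpha>\<in>monomials n. le \<alpha> \<alpha>) \<and>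
     (\<forall>\<alpha>\<in>monomials n. \<forall>\<beta>\<in>monomials n. le \<alpha> \<beta> \<and> le \<beta> \<alpha> \<longrightarrow> \<alpha> = \<beta>) \<and>
     (\<forall>\<alpha>\<in>monomials n. \<forall>\<beta>\<in>monomials n. \<forall>\<gamma>\<in>monomials n. le \<alpha> \<beta> \<and> le \<beta> \<gamma> \<longrightarrow> le \<alpha> \<gamma>) \<and>
     (\<forall>\<alpha>\<in>monomials n. \<forall>\<beta>\<in>monomials n. le \<alpha> \<beta> \<or> le \<beta> \<alpha>) \<and>
     (\<forall>\<alpha>\<in>monomials n. le 0 \<alpha>) \<and>
     (\<forall>\<alpha>\<in>monomials n. \<forall>\<beta>\<in>monomials n. \<forall>\<gamma>\<in>monomials n. le \<alpha> \<beta> \<longrightarrow> le (\<alpha> + \<gamma>) (\<beta> + \<gamma>))"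

definition gauss_val_term :: "('k \<Rightarrow> int) \<Rightarrow> nat \<Rightarrow> (nat \<Rightarrow> rat) \<Rightarrow> 'k \<times> (nat \<Rightarrow>\<^sub>0 nat) \<Rightarrow> rat" where
  "gauss_val_term val n s t = of_int (val (fst t)) - (\<Sum>i<n. s i * of_nat (Poly_Mapping.lookup (snd t) i))"

definition gauss_val :: "('k::field \<Rightarrow> int) \<Rightarrow> nat \<Rightarrow> (nat \<Rightarrow> rat) \<Rightarrow> ((nat \<Rightarrow>\<^sub>0 nat) \<Rightarrow>\<^sub>0 'k) \<Rightarrow> rat" where
  "gauss_val val n s f = Min ((\<lambda>\<alpha>. gauss_val_term val n s (Poly_Mapping.lookup f \<alpha>, \<alpha>)) ` Poly_Mapping.keys f)"

definition term_less :: "('k \<Rightarrow> int) \<Rightarrow> nat \<Rightarrow> (nat \<Rightarrow> rat) \<Rightarrow> ((nat \<Rightarrow>\<^sub>0 nat) \<Rightarrow> (nat \<Rightarrow>\<^sub>0 nat) \<Rightarrow> bool)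
     \<Rightarrow> 'k \<times> (nat \<Rightarrow>\<^sub>0 nat) \<Rightarrow> 'k \<times> (nat \<Rightarrow>\<^sub>0 nat) \<Rightarrow> bool" where
  "term_less val n r le t1 t2 \<longleftrightarrow>
     gauss_val_term val n r t1 > gauss_val_term val n r t2 \<or>
     (gauss_val_term val n r t1 = gauss_val_term val n r t2 \<and> le (snd t1) (snd t2) \<and> snd t1 \<noteq> snd t2)"

definition leading_term :: "('k::field \<Rightarrow> int) \<Rightarrow> nat \<Rightarrow> (nat \<Rightarrow> rat) \<Rightarrow> ((nat \<Rightarrow>\<^sub>0 nat) \<Rightarrow> (nat \<Rightarrow>\<^sub>0 nat) \<Rightarrow> bool)
     \<Rightarrow> ((nat \<Rightarrow>\<^sub>0 nat) \<Rightarrow>\<^sub>0 'k) \<Rightarrow> ((nat \<Rightarrow>\<^sub>0 nat) \<Rightarrow>\<^sub>0 'k)" where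
  "leading_term val n r le f =
     (if f = 0 then 0 else
      (let \<alpha> = (THE \<alpha>. \<alpha> \<in> Poly_Mapping.keys f \<and>
                 (\<forall>\<beta>\<in>Poly_Mapping.keys f. \<beta> \<noteq> \<alpha> \<longrightarrow> term_less val n r le (Poly_Mapping.lookup f \<beta>, \<beta>) (Poly_Mapping.lookup f \<alpha>, \<alpha>)))
       in Poly_Mapping.single \<alpha> (Poly_Mapping.lookup f \<alpha>)))"

definition init_part :: "('k::field \<Rightarrow> int) \<Rightarrow> nat \<Rightarrow> (nat \<Rightarrow> rat) \<Rightarrow> ((nat \<Rightarrow>\<^sub>0 nat) \<Rightarrow>\<^sub>0 'k) \<Rightarrow> ((nat \<Rightarrow>\<^sub>0 nat) \<Rightarrow>\<^sub>0 'k)" where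
  "init_part val n s f =
     (\<Sum>\<alpha>\<in>{\<alpha>\<in>Poly_Mapping.keys f. gauss_val_term val n s (Poly_Mapping.lookup f \<alpha>, \<alpha>) = gauss_val val n s f}.
        Poly_Mapping.single \<alpha> (Poly_Mapping.lookup f \<alpha>))"

end

theory Submission
  imports Defs "HOL-Library.Function_Algebras"
begin

(*
  On a finite set S of monomials a monomial order <_m agrees with the order defined by some
  rational weight vector w. Otherwise Gordan's alternative, which follows by Fourier-Motzkin
  elimination, yields a positive integer combination of exponent differences a - b with b <_m a
  that vanishes; but since <_m is compatible with addition, such a combination is again a
  difference a' - b' with b' <_m a', so a' = b', which is absurd.

  For s = r + \<epsilon> w and \<epsilon> > 0 small, val_s = val_r - \<epsilon> w . alpha keeps every strict inequality
  between the finitely many values val_r(t), and breaks the ties according to w, i.e. according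
  to <_m. Applied to all terms of all f in F, this makes the leading term for s the unique term
  of minimal val_s, which is init_s(f).
*)

inductive_set add_closure :: "'a::plus set \<Rightarrow> 'a set" for D where
  base: "d \<in> D \<Longrightarrow> d \<in> add_closure D"
| add: "x \<in> add_closure D \<Longrightarrow> y \<in> add_closure D \<Longrightarrow> x + y \<in> add_closure D"

lemma add_closure_least:
  assumes "D \<subseteq> S" and "\<And>x y. x \<in> S \<Longrightarrow> y \<in> S \<Longrightarrow> x + y \<in> S"
  shows "add_closure D \<subseteq> S"
proof
  fix x assume "x \<in> add_closure D"
  then show "x \<in> S" by induction (use assms in auto)
qed

lemma add_closure_scale:
  fixes d :: "'a \<Rightarrow> int"
  assumes "d \<in> add_closure D" and "0 < k"
  shows "(\<lambda>i. k * d i) \<in> add_closure D"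
proof -
  have "k \<ge> 1" using assms(2) by simp
  then show ?thesis
  proof (induction k rule: int_ge_induct)
    case base
    show ?case using assms(1) by simp
  next
    case (step k)
    have "(\<lambda>i. (k + 1) * d i) = (\<lambda>i. k * d i) + d"
      by (auto simp: algebra_simps)
    then show ?case using step.IH assms(1) by (simp add: add_closure.add)
  qed
qed

lemma finite_sets_separated:
  fixes X Y :: "'a::{dense_linorder, no_top, no_bot} set"
  assumes "finite X" "finite Y" and "\<forall>x\<in>X. \<forall>y\<in>Y. x < y"
  shows "\<exists>t. (\<forall>x\<in>X. x < t) \<and> (\<forall>y\<in>Y. t < y)"
proof -
  have "\<exists>t. (X \<noteq> {} \<longrightarrow> Max X < t) \<and> (Y \<noteq> {} \<longrightarrow> t < Min Y)"
  proof (cases "X = {}"; cases "Y = {}")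
    assume "X \<noteq> {}" "Y \<noteq> {}"
    then have "Max X < Min Y" using assms by simp
    then show ?thesis using dense by blast
  qed (auto intro: lt_ex gt_ex)
  then show ?thesis using assms(1,2) by (auto simp: Max_less_iff Min_gr_iff)
qed

definition dot :: "nat \<Rightarrow> (nat \<Rightarrow> rat) \<Rightarrow> (nat \<Rightarrow> int) \<Rightarrow> rat" where
  "dot n w d = (\<Sum>i<n. w i * of_int (d i))"

lemma dot_diff_scaled:
  "dot n w (\<lambda>i. a * p i - b * q i) = of_int a * dot n w p - of_int b * dot n w q"
  by (simp add: dot_def algebra_simps sum_subtractf sum_distrib_left)

lemma dot_Suc_fun_upd: "dot (Suc n) (w(n := t)) d = dot n w d + t * of_int (d n)"
  by (simp add: dot_def)

definition fourier_motzkin_elim :: "nat \<Rightarrow> (nat \<Rightarrow> int) set \<Rightarrow> (nat \<Rightarrow> int) set" where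
  "fourier_motzkin_elim j D = {d \<in> D. d j = 0} \<union>
     (\<lambda>(p, q) i. p j * q i - q j * p i) ` {(p, q) \<in> D \<times> D. 0 < p j \<and> q j < 0}"

lemma finite_fourier_motzkin_elim: "finite D \<Longrightarrow> finite (fourier_motzkin_elim j D)"
  unfolding fourier_motzkin_elim_def by (auto intro: finite_subset[of _ "D \<times> D"])

lemma fourier_motzkin_elim_vanishes: "d \<in> fourier_motzkin_elim j D \<Longrightarrow> d j = 0"
  unfolding fourier_motzkin_elim_def by (auto simp: mult.commute)

lemma fourier_motzkin_elim_subset_add_closure: "fourier_motzkin_elim j D \<subseteq> add_closure D"
proof
  fix d assume "d \<in> fourier_motzkin_elim j D"
  then consider "d \<in> D" | p q where "p \<in> D" "q \<in> D" "0 < p j" "q j < 0"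
      "d = (\<lambda>i. p j * q i - q j * p i)"
    unfolding fourier_motzkin_elim_def by auto
  then show "d \<in> add_closure D"
  proof cases
    case 2
    have "(\<lambda>i. p j * q i) + (\<lambda>i. - q j * p i) \<in> add_closure D"
      using 2 by (intro add_closure.add add_closure_scale add_closure.base) auto
    then show ?thesis using 2 by (simp add: plus_fun_def)
  qed (rule add_closure.base)
qed

lemma fourier_motzkin_elim_extend_weight:
  assumes "finite D" and pos: "\<forall>d\<in>fourier_motzkin_elim n D. 0 < dot n w d"
  shows "\<exists>t. \<forall>d\<in>D. 0 < dot (Suc n) (w(n := t)) d"
proof -
  define bound where "bound d = - dot n w d / of_int (d n)" for d
  define X where "X = bound ` {p \<in> D. 0 < p n}"
  define Y where "Y = bound ` {q \<in> D. q n < 0}"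
  have "x < y" if xy: "x \<in> X" "y \<in> Y" for x y
  proof -
    obtain p q where p: "p \<in> D" "0 < p n" "x = bound p" and q: "q \<in> D" "q n < 0" "y = bound q"
      using xy unfolding X_def Y_def by blast
    then have "(\<lambda>i. p n * q i - q n * p i) \<in> fourier_motzkin_elim n D"
      by (auto simp: fourier_motzkin_elim_def)
    then have "0 < dot n w (\<lambda>i. p n * q i - q n * p i)"
      using pos by blast
    then have "0 < of_int (p n) * dot n w q - of_int (q n) * dot n w p"
      by (simp only: dot_diff_scaled)
    moreover have "(0::rat) < of_int (p n)" "of_int (q n) < (0::rat)"
      using p q by simp_all
    ultimately show "x < y" unfolding p(3) q(3) bound_def by (simp add: field_simps)
  qed
  moreover have "finite X" "finite Y" using assms(1) by (simp_all add: X_def Y_def)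
  ultimately obtain t where t: "\<forall>x\<in>X. x < t" "\<forall>y\<in>Y. t < y"
    using finite_sets_separated[of X Y] by blast
  have "0 < dot (Suc n) (w(n := t)) d" if "d \<in> D" for d
  proof -
    consider "d n = 0" | "0 < d n" | "d n < 0" by linarith
    then show ?thesis
    proof cases
      case 1
      then show ?thesis using that pos by (simp add: dot_Suc_fun_upd fourier_motzkin_elim_def)
    next
      case 2
      then have "bound d < t" using t that by (simp add: X_def)
      moreover have "(0::rat) < of_int (d n)" using 2 by simp
      ultimately show ?thesis by (simp add: dot_Suc_fun_upd bound_def field_simps)
    next
      case 3
      then have "t < bound d" using t that by (simp add: Y_def)
      moreover have "of_int (d n) < (0::rat)" using 3 by simp
      ultimately show ?thesis by (simp add: dot_Suc_fun_upd bound_def field_simps)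
    qed
  qed
  then show ?thesis by blast
qed

lemma gordan_alternative:
  fixes D :: "(nat \<Rightarrow> int) set"
  assumes "finite D"
  shows "(\<exists>w. \<forall>d\<in>D. 0 < dot n w d) \<or> (\<exists>x\<in>add_closure D. \<forall>i<n. x i = 0)"
  using assms
proof (induction n arbitrary: D)
  case 0
  then show ?case by (cases "D = {}") (auto simp: dot_def intro: add_closure.base)
next
  case (Suc n)
  from Suc.IH[OF finite_fourier_motzkin_elim[OF Suc.prems]] show ?case
  proof
    assume "\<exists>w. \<forall>d\<in>fourier_motzkin_elim n D. 0 < dot n w d"
    then show ?case using fourier_motzkin_elim_extend_weight[OF Suc.prems] by blast
  next
    assume "\<exists>x\<in>add_closure (fourier_motzkin_elim n D). \<forall>i<n. x i = 0"
    then obtain x where x: "x \<in> add_closure (fourier_motzkin_elim n D)" "\<forall>i<n. x i = 0"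
      by blast
    have "add_closure (fourier_motzkin_elim n D) \<subseteq> add_closure D"
      using fourier_motzkin_elim_subset_add_closure by (rule add_closure_least) (rule add_closure.add)
    moreover have "add_closure (fourier_motzkin_elim n D) \<subseteq> {x. x n = 0}"
      using fourier_motzkin_elim_vanishes by (intro add_closure_least) auto
    ultimately show ?case using x less_Suc_eq by auto
  qed
qed

definition weight :: "nat \<Rightarrow> (nat \<Rightarrow> rat) \<Rightarrow> (nat \<Rightarrow>\<^sub>0 nat) \<Rightarrow> rat" where
  "weight n w \<alpha> = (\<Sum>i<n. w i * of_nat (Poly_Mapping.lookup \<alpha> i))"

definition exponent_diff :: "(nat \<Rightarrow>\<^sub>0 nat) \<Rightarrow> (nat \<Rightarrow>\<^sub>0 nat) \<Rightarrow> nat \<Rightarrow> int" where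
  "exponent_diff \<alpha> \<beta> = (\<lambda>i. int (Poly_Mapping.lookup \<alpha> i) - int (Poly_Mapping.lookup \<beta> i))"

lemma dot_exponent_diff: "dot n w (exponent_diff \<alpha> \<beta>) = weight n w \<alpha> - weight n w \<beta>"
  by (simp add: dot_def weight_def exponent_diff_def algebra_simps sum_subtractf)

lemma exponent_diff_add:
  "exponent_diff \<alpha> \<beta> + exponent_diff \<gamma> \<delta> = exponent_diff (\<alpha> + \<gamma>) (\<beta> + \<delta>)"
  by (auto simp: exponent_diff_def lookup_add)

lemma exponent_diff_eq_zero_imp_eq:
  assumes "\<alpha> \<in> monomials n" "\<beta> \<in> monomials n" and "\<forall>i<n. exponent_diff \<alpha> \<beta> i = 0"
  shows "\<alpha> = \<beta>"
proof (rule poly_mapping_eqI)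
  fix i
  show "Poly_Mapping.lookup \<alpha> i = Poly_Mapping.lookup \<beta> i"
  proof (cases "i < n")
    case False
    then have "i \<notin> Poly_Mapping.keys \<alpha>" "i \<notin> Poly_Mapping.keys \<beta>"
      using assms(1,2) by (auto simp: monomials_def)
    then show ?thesis by (simp add: in_keys_iff)
  qed (use assms(3) in \<open>simp add: exponent_diff_def\<close>)
qed

lemma monomials_add: "\<alpha> \<in> monomials n \<Longrightarrow> \<beta> \<in> monomials n \<Longrightarrow> \<alpha> + \<beta> \<in> monomials n"
  unfolding monomials_def using keys_add[of \<alpha> \<beta>] by auto

lemma monomial_order_antisym:
  "monomial_order n le \<Longrightarrow> \<alpha> \<in> monomials n \<Longrightarrow> \<beta> \<in> monomials n \<Longrightarrow> le \<alpha> \<beta> \<Longrightarrow> le \<beta> \<alpha>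
    \<Longrightarrow> \<alpha> = \<beta>"
  unfolding monomial_order_def by blast

lemma monomial_order_trans:
  "monomial_order n le \<Longrightarrow> \<alpha> \<in> monomials n \<Longrightarrow> \<beta> \<in> monomials n \<Longrightarrow> \<gamma> \<in> monomials n
    \<Longrightarrow> le \<alpha> \<beta> \<Longrightarrow> le \<beta> \<gamma> \<Longrightarrow> le \<alpha> \<gamma>"
  unfolding monomial_order_def by blast

lemma monomial_order_total:
  "monomial_order n le \<Longrightarrow> \<alpha> \<in> monomials n \<Longrightarrow> \<beta> \<in> monomials n \<Longrightarrow> le \<alpha> \<beta> \<or> le \<beta> \<alpha>"
  unfolding monomial_order_def by blast

lemma monomial_order_add_right:
  "monomial_order n le \<Longrightarrow> \<alpha> \<in> monomials n \<Longrightarrow> \<beta> \<in> monomials n \<Longrightarrow> \<gamma> \<in> monomials n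
    \<Longrightarrow> le \<alpha> \<beta> \<Longrightarrow> le (\<alpha> + \<gamma>) (\<beta> + \<gamma>)"
  unfolding monomial_order_def by blast

lemma monomial_order_add_strict:
  assumes mo: "monomial_order n le"
    and mon: "\<alpha> \<in> monomials n" "\<beta> \<in> monomials n" "\<gamma> \<in> monomials n" "\<delta> \<in> monomials n"
    and less: "le \<beta> \<alpha>" "\<beta> \<noteq> \<alpha>" "le \<delta> \<gamma>" "\<delta> \<noteq> \<gamma>"
  shows "le (\<beta> + \<delta>) (\<alpha> + \<gamma>) \<and> \<beta> + \<delta> \<noteq> \<alpha> + \<gamma>"
proof -
  have sums: "\<beta> + \<delta> \<in> monomials n" "\<alpha> + \<delta> \<in> monomials n" "\<alpha> + \<gamma> \<in> monomials n"
    using mon monomials_add by auto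
  have 1: "le (\<beta> + \<delta>) (\<alpha> + \<delta>)"
    using monomial_order_add_right[OF mo] mon less by blast
  have "le (\<delta> + \<alpha>) (\<gamma> + \<alpha>)"
    using monomial_order_add_right[OF mo] mon less by blast
  then have 2: "le (\<alpha> + \<delta>) (\<alpha> + \<gamma>)"
    by (simp add: add.commute)
  have "le (\<beta> + \<delta>) (\<alpha> + \<gamma>)"
    using monomial_order_trans[OF mo sums(1,2,3) 1 2] .
  moreover have "\<beta> + \<delta> \<noteq> \<alpha> + \<gamma>"
  proof
    assume "\<beta> + \<delta> = \<alpha> + \<gamma>"
    then have "\<alpha> + \<delta> = \<beta> + \<delta>"
      using monomial_order_antisym[OF mo sums(2,1)] 1 2 by simp
    then show False using less(2) by simp
  qed
  ultimately show ?thesis ..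
qed

lemma monomial_order_weight_vector:
  assumes mo: "monomial_order n le" and S: "finite S" "S \<subseteq> monomials n"
  shows "\<exists>w. \<forall>\<alpha>\<in>S. \<forall>\<beta>\<in>S. le \<beta> \<alpha> \<and> \<beta> \<noteq> \<alpha> \<longleftrightarrow> weight n w \<beta> < weight n w \<alpha>"
proof -
  define P where "P = {(\<alpha>, \<beta>) \<in> S \<times> S. le \<beta> \<alpha> \<and> \<beta> \<noteq> \<alpha>}"
  define D where "D = (\<lambda>(\<alpha>, \<beta>). exponent_diff \<alpha> \<beta>) ` P"
  define E where "E = {exponent_diff \<alpha> \<beta> | \<alpha> \<beta>.
    \<alpha> \<in> monomials n \<and> \<beta> \<in> monomials n \<and> le \<beta> \<alpha> \<and> \<beta> \<noteq> \<alpha>}"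
  have "finite D"
    unfolding D_def P_def using S(1) by (auto intro: finite_subset[of _ "S \<times> S"])
  have "add_closure D \<subseteq> E"
  proof (rule add_closure_least)
    show "D \<subseteq> E" using S(2) by (auto simp: D_def P_def E_def)
    show "x + y \<in> E" if xy: "x \<in> E" "y \<in> E" for x y
    proof -
      obtain \<alpha> \<beta> \<gamma> \<delta> where x: "x = exponent_diff \<alpha> \<beta>" and y: "y = exponent_diff \<gamma> \<delta>"
        and mon: "\<alpha> \<in> monomials n" "\<beta> \<in> monomials n" "\<gamma> \<in> monomials n" "\<delta> \<in> monomials n"
        and less: "le \<beta> \<alpha>" "\<beta> \<noteq> \<alpha>" "le \<delta> \<gamma>" "\<delta> \<noteq> \<gamma>"
        using xy unfolding E_def by blast
      have "le (\<beta> + \<delta>) (\<alpha> + \<gamma>) \<and> \<beta> + \<delta> \<noteq> \<alpha> + \<gamma>"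
        using monomial_order_add_strict[OF mo mon less] .
      moreover have "\<alpha> + \<gamma> \<in> monomials n" "\<beta> + \<delta> \<in> monomials n"
        using mon monomials_add by auto
      ultimately show ?thesis unfolding x y exponent_diff_add E_def by blast
    qed
  qed
  then have "\<not> (\<exists>x\<in>add_closure D. \<forall>i<n. x i = 0)"
    using exponent_diff_eq_zero_imp_eq unfolding E_def by blast
  then obtain w where w: "\<forall>d\<in>D. 0 < dot n w d"
    using gordan_alternative[OF \<open>finite D\<close>] by blast
  have less: "weight n w \<beta> < weight n w \<alpha>"
    if "\<alpha> \<in> S" "\<beta> \<in> S" "le \<beta> \<alpha>" "\<beta> \<noteq> \<alpha>" for \<alpha> \<beta>
  proof -
    have "exponent_diff \<alpha> \<beta> \<in> D"
      unfolding D_def P_def using that by (auto intro: image_eqI[where x = "(\<alpha>, \<beta>)"])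
    then have "0 < dot n w (exponent_diff \<alpha> \<beta>)" using w by blast
    then show ?thesis by (simp add: dot_exponent_diff)
  qed
  have "le \<beta> \<alpha> \<and> \<beta> \<noteq> \<alpha>" if "\<alpha> \<in> S" "\<beta> \<in> S" "weight n w \<beta> < weight n w \<alpha>" for \<alpha> \<beta>
    using that less[of \<beta> \<alpha>] monomial_order_total[OF mo, of \<alpha> \<beta>] S(2) by auto
  with less show ?thesis by blast
qed

lemma ex_small_pos_scalar:
  fixes c d :: "'a \<Rightarrow> 'b::linordered_field"
  assumes "finite P" and "\<forall>p\<in>P. 0 < d p"
  shows "\<exists>\<epsilon>>0. \<forall>p\<in>P. \<epsilon> * \<bar>c p\<bar> < d p"
  using assms
proof (induction P rule: finite_induct)
  case empty
  show ?case using zero_less_one by blast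
next
  case (insert p P)
  then obtain \<epsilon> where \<epsilon>: "0 < \<epsilon>" "\<forall>q\<in>P. \<epsilon> * \<bar>c q\<bar> < d q" by auto
  define \<epsilon>' where "\<epsilon>' = min \<epsilon> (d p / (\<bar>c p\<bar> + 1))"
  have "0 < d p" using insert.prems by simp
  then have "0 < \<epsilon>'" using \<epsilon>(1) by (simp add: \<epsilon>'_def add_pos_nonneg)
  moreover have "\<epsilon>' * \<bar>c q\<bar> < d q" if "q \<in> P" for q
    using \<epsilon> that mult_right_mono[of \<epsilon>' \<epsilon> "\<bar>c q\<bar>"] by (fastforce simp: \<epsilon>'_def)
  moreover have "\<epsilon>' * \<bar>c p\<bar> < d p"
  proof -
    have "\<epsilon>' * \<bar>c p\<bar> \<le> d p / (\<bar>c p\<bar> + 1) * \<bar>c p\<bar>"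
      unfolding \<epsilon>'_def by (intro mult_right_mono) auto
    also have "\<dots> < d p"
      using \<open>0 < d p\<close> by (simp add: field_simps add_pos_nonneg)
    finally show ?thesis .
  qed
  ultimately show ?case by blast
qed

lemma gauss_val_term_weight: "gauss_val_term val n s t = of_int (val (fst t)) - weight n s (snd t)"
  by (simp add: gauss_val_term_def weight_def)

lemma weight_perturb: "weight n (\<lambda>i. r i + \<epsilon> * w i) \<alpha> = weight n r \<alpha> + \<epsilon> * weight n w \<alpha>"
  by (simp add: weight_def algebra_simps sum.distrib sum_distrib_left)

lemma term_order_realised_by_gauss_val:
  fixes val :: "'k::field \<Rightarrow> int"
  assumes mo: "monomial_order n le" and T: "finite T" "T \<subseteq> terms n"
  shows "\<exists>s. \<forall>t1\<in>T. \<forall>t2\<in>T.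
           term_less val n r le t2 t1 \<longleftrightarrow> gauss_val_term val n s t1 < gauss_val_term val n s t2"
proof -
  have "finite (snd ` T)" and "snd ` T \<subseteq> monomials n"
    using T by (auto simp: terms_def)
  from monomial_order_weight_vector[OF mo this] obtain w
    where w: "\<forall>\<alpha>\<in>snd ` T. \<forall>\<beta>\<in>snd ` T. le \<beta> \<alpha> \<and> \<beta> \<noteq> \<alpha> \<longleftrightarrow> weight n w \<beta> < weight n w \<alpha>"
    by blast
  define g where "g t = gauss_val_term val n r t" for t
  define W where "W t = weight n w (snd t)" for t :: "'k \<times> (nat \<Rightarrow>\<^sub>0 nat)"
  define P where "P = {(t1, t2) \<in> T \<times> T. g t1 \<noteq> g t2}"
  have "finite P" unfolding P_def using T(1) by (auto intro: finite_subset[of _ "T \<times> T"])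
  then have "\<exists>\<epsilon>>0. \<forall>p\<in>P. \<epsilon> * \<bar>W (fst p) - W (snd p)\<bar> < \<bar>g (fst p) - g (snd p)\<bar>"
    by (rule ex_small_pos_scalar) (auto simp: P_def)
  then obtain \<epsilon> where "0 < \<epsilon>"
    and \<epsilon>: "\<forall>p\<in>P. \<epsilon> * \<bar>W (fst p) - W (snd p)\<bar> < \<bar>g (fst p) - g (snd p)\<bar>"
    by blast
  define s where "s = (\<lambda>i. r i + \<epsilon> * w i)"
  have gs: "gauss_val_term val n s t = g t - \<epsilon> * W t" for t
    by (simp add: s_def g_def W_def gauss_val_term_weight weight_perturb)
  have "term_less val n r le t2 t1 \<longleftrightarrow> g t1 - \<epsilon> * W t1 < g t2 - \<epsilon> * W t2"
    if t: "t1 \<in> T" "t2 \<in> T" for t1 t2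
  proof (cases "g t1 = g t2")
    case True
    then have "term_less val n r le t2 t1 \<longleftrightarrow> le (snd t2) (snd t1) \<and> snd t2 \<noteq> snd t1"
      by (auto simp: term_less_def g_def)
    also have "\<dots> \<longleftrightarrow> W t2 < W t1"
      using w t by (simp add: W_def)
    also have "\<dots> \<longleftrightarrow> g t1 - \<epsilon> * W t1 < g t2 - \<epsilon> * W t2"
      using True \<open>0 < \<epsilon>\<close> by simp
    finally show ?thesis .
  next
    case False
    then have "(t1, t2) \<in> P" using t by (simp add: P_def)
    then have "\<epsilon> * \<bar>W t1 - W t2\<bar> < \<bar>g t1 - g t2\<bar>" using \<epsilon> by fastforce
    then have "\<bar>\<epsilon> * W t1 - \<epsilon> * W t2\<bar> < \<bar>g t1 - g t2\<bar>"
      using \<open>0 < \<epsilon>\<close> by (simp add: abs_mult right_diff_distrib[symmetric])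
    then have "g t1 < g t2 \<longleftrightarrow> g t1 - \<epsilon> * W t1 < g t2 - \<epsilon> * W t2"
      by (auto simp: abs_if split: if_splits)
    then show ?thesis
      using False by (auto simp: term_less_def g_def)
  qed
  then show ?thesis by (intro exI[of _ s]) (simp add: gs)
qed

abbreviation term_at :: "((nat \<Rightarrow>\<^sub>0 nat) \<Rightarrow>\<^sub>0 'k::zero) \<Rightarrow> (nat \<Rightarrow>\<^sub>0 nat) \<Rightarrow> 'k \<times> (nat \<Rightarrow>\<^sub>0 nat)" where
  "term_at f \<alpha> \<equiv> (Poly_Mapping.lookup f \<alpha>, \<alpha>)"

lemma term_less_asym:
  assumes "monomial_order n le" "snd t1 \<in> monomials n" "snd t2 \<in> monomials n"
    and "term_less val n r le t1 t2"
  shows "\<not> term_less val n r le t2 t1"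
  using assms monomial_order_antisym[of n le "snd t1" "snd t2"] by (auto simp: term_less_def)

lemma term_less_total:
  assumes "monomial_order n le" "snd t1 \<in> monomials n" "snd t2 \<in> monomials n"
    and "snd t1 \<noteq> snd t2"
  shows "term_less val n r le t1 t2 \<or> term_less val n r le t2 t1"
  using assms monomial_order_total[of n le "snd t1" "snd t2"] by (auto simp: term_less_def)

lemma leading_term_eqI:
  assumes mo: "monomial_order n le" and f: "f \<in> polys n" and \<alpha>: "\<alpha> \<in> Poly_Mapping.keys f"
    and max: "\<forall>\<beta>\<in>Poly_Mapping.keys f. \<beta> \<noteq> \<alpha> \<longrightarrow> term_less val n r le (term_at f \<beta>) (term_at f \<alpha>)"
  shows "leading_term val n r le f = Poly_Mapping.single \<alpha> (Poly_Mapping.lookup f \<alpha>)"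
proof -
  have keys: "Poly_Mapping.keys f \<subseteq> monomials n" using f by (simp add: polys_def)
  have "(THE \<alpha>. \<alpha> \<in> Poly_Mapping.keys f \<and> (\<forall>\<beta>\<in>Poly_Mapping.keys f. \<beta> \<noteq> \<alpha> \<longrightarrow>
          term_less val n r le (term_at f \<beta>) (term_at f \<alpha>))) = \<alpha>"
  proof (rule the_equality)
    fix \<alpha>' assume \<alpha>': "\<alpha>' \<in> Poly_Mapping.keys f \<and> (\<forall>\<beta>\<in>Poly_Mapping.keys f. \<beta> \<noteq> \<alpha>' \<longrightarrow>
          term_less val n r le (term_at f \<beta>) (term_at f \<alpha>'))"
    show "\<alpha>' = \<alpha>"
    proof (rule ccontr)
      assume "\<alpha>' \<noteq> \<alpha>"
      then have "term_less val n r le (term_at f \<alpha>) (term_at f \<alpha>')"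
        and "term_less val n r le (term_at f \<alpha>') (term_at f \<alpha>)"
        using \<alpha> \<alpha>' max by auto
      then show False using term_less_asym[OF mo, of "term_at f \<alpha>" "term_at f \<alpha>'"] \<alpha> \<alpha>' keys by auto
    qed
  qed (intro conjI \<alpha> max)
  moreover have "f \<noteq> 0" using \<alpha> by auto
  ultimately show ?thesis by (simp add: leading_term_def)
qed

lemma init_part_eq_single:
  assumes \<alpha>: "\<alpha> \<in> Poly_Mapping.keys f"
    and min: "\<forall>\<beta>\<in>Poly_Mapping.keys f. \<beta> \<noteq> \<alpha> \<longrightarrow>
      gauss_val_term val n s (term_at f \<alpha>) < gauss_val_term val n s (term_at f \<beta>)"
  shows "init_part val n s f = Poly_Mapping.single \<alpha> (Poly_Mapping.lookup f \<alpha>)"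
proof -
  have "gauss_val_term val n s (term_at f \<alpha>) \<le> gauss_val_term val n s (term_at f \<beta>)"
    if "\<beta> \<in> Poly_Mapping.keys f" for \<beta>
    using min that by (cases "\<beta> = \<alpha>") (auto intro: less_imp_le)
  then have "gauss_val val n s f = gauss_val_term val n s (term_at f \<alpha>)"
    unfolding gauss_val_def using \<alpha> by (intro Min_eqI) auto
  then have "{\<beta> \<in> Poly_Mapping.keys f. gauss_val_term val n s (term_at f \<beta>) = gauss_val val n s f} = {\<alpha>}"
    using \<alpha> min by auto
  then show ?thesis by (simp add: init_part_def)
qed

lemma leading_term_eq_init_part:
  assumes mo: "monomial_order n le" and f: "f \<in> polys n"
    and agree: "\<forall>\<alpha>\<in>Poly_Mapping.keys f. \<forall>\<beta>\<in>Poly_Mapping.keys f.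
      term_less val n r le (term_at f \<beta>) (term_at f \<alpha>) \<longleftrightarrow>
      gauss_val_term val n s (term_at f \<alpha>) < gauss_val_term val n s (term_at f \<beta>)"
  shows "leading_term val n s le f = leading_term val n r le f \<and>
         leading_term val n s le f = init_part val n s f"
proof (cases "f = 0")
  case True
  then show ?thesis by (simp add: leading_term_def init_part_def)
next
  case False
  define G where "G \<alpha> = gauss_val_term val n s (term_at f \<alpha>)" for \<alpha>
  have keys: "Poly_Mapping.keys f \<subseteq> monomials n" using f by (simp add: polys_def)
  from False obtain \<alpha> where \<alpha>: "\<alpha> \<in> Poly_Mapping.keys f" and \<alpha>_min: "\<forall>\<beta>\<in>Poly_Mapping.keys f. G \<alpha> \<le> G \<beta>"
    using ex_is_arg_min_if_finite[of "Poly_Mapping.keys f" G]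
    by (auto simp: is_arg_min_def not_less)
  have strict: "G \<alpha> < G \<beta>" if \<beta>: "\<beta> \<in> Poly_Mapping.keys f" "\<beta> \<noteq> \<alpha>" for \<beta>
  proof -
    have "term_less val n r le (term_at f \<beta>) (term_at f \<alpha>) \<or>
          term_less val n r le (term_at f \<alpha>) (term_at f \<beta>)"
      using term_less_total[OF mo, of "term_at f \<beta>" "term_at f \<alpha>"] \<alpha> \<beta> keys by auto
    moreover have "\<not> G \<beta> < G \<alpha>" using \<alpha>_min \<beta> by (simp add: not_less)
    ultimately show ?thesis using agree \<alpha> \<beta> unfolding G_def by blast
  qed
  have "leading_term val n s le f = Poly_Mapping.single \<alpha> (Poly_Mapping.lookup f \<alpha>)"
    using strict by (intro leading_term_eqI[OF mo f \<alpha>]) (simp add: term_less_def G_def)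
  moreover have "leading_term val n r le f = Poly_Mapping.single \<alpha> (Poly_Mapping.lookup f \<alpha>)"
    using strict agree \<alpha> by (intro leading_term_eqI[OF mo f \<alpha>]) (simp add: G_def)
  moreover have "init_part val n s f = Poly_Mapping.single \<alpha> (Poly_Mapping.lookup f \<alpha>)"
    using strict by (intro init_part_eq_single[OF \<alpha>]) (simp add: G_def)
  ultimately show ?thesis by simp
qed

lemma leading_terms_realised_by_gauss_val:
  fixes val :: "'k::field \<Rightarrow> int"
  assumes mo: "monomial_order n le" and F: "finite F" "F \<subseteq> polys n"
  shows "\<exists>s. \<forall>f\<in>F. leading_term val n s le f = leading_term val n r le f \<and>
                  leading_term val n s le f = init_part val n s f"
proof -
  define T where "T = (\<Union>f\<in>F. term_at f ` Poly_Mapping.keys f)"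
  have "finite T"
    using F(1) by (simp add: T_def)
  moreover have "T \<subseteq> terms n"
    using F(2) by (auto simp: T_def terms_def polys_def in_keys_iff)
  ultimately obtain s where s: "\<forall>t1\<in>T. \<forall>t2\<in>T.
      term_less val n r le t2 t1 \<longleftrightarrow> gauss_val_term val n s t1 < gauss_val_term val n s t2"
    using term_order_realised_by_gauss_val[OF mo] by blast
  have "leading_term val n s le f = leading_term val n r le f \<and>
        leading_term val n s le f = init_part val n s f" if f: "f \<in> F" for f
  proof -
    have "term_at f ` Poly_Mapping.keys f \<subseteq> T"
      using f by (auto simp: T_def)
    then have agree: "\<forall>\<alpha>\<in>Poly_Mapping.keys f. \<forall>\<beta>\<in>Poly_Mapping.keys f.
        term_less val n r le (term_at f \<beta>) (term_at f \<alpha>) \<longleftrightarrow>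
        gauss_val_term val n s (term_at f \<alpha>) < gauss_val_term val n s (term_at f \<beta>)"
      using s by (simp add: image_subset_iff)
    have "f \<in> polys n" using f F(2) by blast
    from leading_term_eq_init_part[OF mo this agree] show ?thesis .
  qed
  then show ?thesis by blast
qed

theorem mainTheorem2:
  fixes val :: "'k::field \<Rightarrow> int"
    and n :: nat
    and r :: "nat \<Rightarrow> rat"
    and le :: "(nat \<Rightarrow>\<^sub>0 nat) \<Rightarrow> (nat \<Rightarrow>\<^sub>0 nat) \<Rightarrow> bool"
    and T :: "('k \<times> (nat \<Rightarrow>\<^sub>0 nat)) set"
    and F :: "((nat \<Rightarrow>\<^sub>0 nat) \<Rightarrow>\<^sub>0 'k) set"
  assumes "discrete_valuation val"
    and "val_complete val"
    and "monomial_order n le"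
    and "finite T" and "T \<subseteq> terms n"
    and "finite F" and "F \<subseteq> polys n"
  shows "(\<exists>s :: nat \<Rightarrow> rat. \<forall>t1\<in>T. \<forall>t2\<in>T.
            term_less val n r le t2 t1 \<longleftrightarrow> gauss_val_term val n s t1 < gauss_val_term val n s t2)
       \<and> (\<exists>s :: nat \<Rightarrow> rat.
            leading_term val n s le ` F = leading_term val n r le ` F \<and>
            (\<forall>f\<in>F. leading_term val n s le f = init_part val n s f))"
proof
  show "\<exists>s. \<forall>t1\<in>T. \<forall>t2\<in>T.
          term_less val n r le t2 t1 \<longleftrightarrow> gauss_val_term val n s t1 < gauss_val_term val n s t2"
    using term_order_realised_by_gauss_val[OF assms(3-5)] .
next
  obtain s where s: "\<forall>f\<in>F. leading_term val n s le f = leading_term val n r le f \<and>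
                            leading_term val n s le f = init_part val n s f"
    using leading_terms_realised_by_gauss_val[OF assms(3,6,7)] by blast
  then have "leading_term val n s le ` F = leading_term val n r le ` F"
    by (intro image_cong) auto
  with s show "\<exists>s. leading_term val n s le ` F = leading_term val n r le ` F \<and>
      (\<forall>f\<in>F. leading_term val n s le f = init_part val n s f)"
    by blast
qed

end
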